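(* Let $a_n$, $s$ and $c$ be any integers and let $n$ be a positive integer. Then \[ \sum_{a_{n-1}=c}^{a_n}\sum_{a_{n-2}=c}^{a_{n-1}}\cdots\sum_{a_0=c}^{a_1}F_{3a_0+s}=\frac{F_{2n+3a_n+s}}{2^n}-\sum_{j=0}^{n-1}\frac{F_{2(n-j)+3(c-1)+s}}{2^{n-j}}\binom{a_n+j-c}{j}, \] and \[ \sum_{a_{n-1}=c}^{a_n}\sum_{a_{n-2}=c}^{a_{n-1}}\cdots\sum_{a_0=c}^{a_1}L_{3a_0+s}=\frac{L_{2n+3a_n+s}}{2^n}-\sum_{j=0}^{n-1}\frac{L_{2(n-j)+3(c-1)+s}}{2^{n-j}}\binom{a_n+j-c}{j}. \]
   Context: $F_j$ and $L_j$ are the Fibonacci and Lucas numbers: $F_0=0,F_1=1$, $L_0=2,L_1=1$, both satisfying $X_j=X_{j-1}+X_{j-2}$, extended to all integer indices via the recurrence. For integers $c,m$ and a function $f$ on the integers, $\sum_{k=c}^m f(k)$ denotes the usual sum if $m\ge c$, equals $0$ if $m=c-1$, and equals $-\sum_{k=m+1}^{c-1}f(k)$ if $m\le c-2$. The nested sum $\sum_{a_{n-1}=c}^{a_n}\cdots\sum_{a_0=c}^{a_1}g(a_0)$ is the iterated sum with $n$ summation signs: innermost over $a_0$ from $c$ to $a_1$, then $a_1$ from $c$ to $a_2$, ..., outermost $a_{n-1}$ from $c$ to $a_n$. For an integer $j\ge0$ and any number $y$, $\binom{y}{j}=y(y-1)\cdots(y-j+1)/j!$. *)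

theory Defs
  imports Complex_Main
begin

text \<open>Sequences satisfying X_j = X_(j-1) + X_(j-2), started at X_0 = x0, X_1 = x1,
  extended to all integers via the recurrence (forwards and backwards).\<close>

fun rec_fwd :: "int \<Rightarrow> int \<Rightarrow> nat \<Rightarrow> int \<times> int" where
  "rec_fwd x0 x1 0 = (x0, x1)"
| "rec_fwd x0 x1 (Suc n) = (let (a, b) = rec_fwd x0 x1 n in (b, a + b))"

fun rec_bwd :: "int \<Rightarrow> int \<Rightarrow> nat \<Rightarrow> int \<times> int" where
  "rec_bwd x0 x1 0 = (x0, x1)"
| "rec_bwd x0 x1 (Suc n) = (let (a, b) = rec_bwd x0 x1 n in (b - a, a))"

definition rec_seq :: "int \<Rightarrow> int \<Rightarrow> int \<Rightarrow> int" where
  "rec_seq x0 x1 k = (if k \<ge> 0 then fst (rec_fwd x0 x1 (nat k)) else fst (rec_bwd x0 x1 (nat (- k))))"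

definition fibZ :: "int \<Rightarrow> int" where "fibZ = rec_seq 0 1"
definition lucZ :: "int \<Rightarrow> int" where "lucZ = rec_seq 2 1"

definition gsum :: "int \<Rightarrow> int \<Rightarrow> (int \<Rightarrow> real) \<Rightarrow> real" where
  "gsum c m f = (if m \<ge> c then (\<Sum>k\<in>{c..m}. f k)
                 else if m = c - 1 then 0
                 else - (\<Sum>k\<in>{m+1..c-1}. f k))"

fun nested_sum :: "int \<Rightarrow> nat \<Rightarrow> (int \<Rightarrow> real) \<Rightarrow> int \<Rightarrow> real" where
  "nested_sum c 0 g a = g a"
| "nested_sum c (Suc n) g a = gsum c a (nested_sum c n g)"

end

theory Submission
  imports Defs
begin

text \<open>Let R n b be the right-hand side with a_n = b. For any sequence with
  X (k + 2) = X (k + 1) + X k one has X (m + 2) - X (m - 1) = 2 X m, which together with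
  Pascal's rule gives R (n + 1) b - R (n + 1) (b - 1) = R n b; moreover R (n + 1) (c - 1) = 0
  since every binomial coefficient (j - 1 choose j) vanishes. So the outermost sum telescopes
  to R (n + 1) a_(n+1), and induction on n proves the formula for every such sequence, in
  particular for the Fibonacci and Lucas numbers.\<close>

lemma rec_fwd_Suc:
  "rec_fwd x0 x1 (Suc n) = (snd (rec_fwd x0 x1 n), fst (rec_fwd x0 x1 n) + snd (rec_fwd x0 x1 n))"
  by (simp add: split_beta)

lemma rec_bwd_Suc:
  "rec_bwd x0 x1 (Suc n) = (snd (rec_bwd x0 x1 n) - fst (rec_bwd x0 x1 n), fst (rec_bwd x0 x1 n))"
  by (simp add: split_beta)

lemma rec_seq_add_two: "rec_seq x0 x1 (k + 2) = rec_seq x0 x1 (k + 1) + rec_seq x0 x1 k"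
proof -
  consider "k \<ge> 0" | "k = -1" | "k = -2" | "k \<le> -3" by linarith
  then show ?thesis
  proof cases
    case 1
    then have "nat (k + 2) = Suc (Suc (nat k))" "nat (k + 1) = Suc (nat k)" by auto
    with 1 show ?thesis unfolding rec_seq_def by (simp only: rec_fwd_Suc) simp
  next
    case 2
    then show ?thesis unfolding rec_seq_def by (simp add: rec_fwd_Suc rec_bwd_Suc)
  next
    case 3
    then have "nat (- k) = Suc (Suc 0)" by simp
    with 3 show ?thesis unfolding rec_seq_def by (simp add: rec_fwd_Suc rec_bwd_Suc numeral_2_eq_2)
  next
    case 4
    then have "nat (- k) = Suc (Suc (nat (- k - 2)))" "nat (- (k + 1)) = Suc (nat (- k - 2))"
      by auto
    with 4 show ?thesis unfolding rec_seq_def by (simp only: rec_bwd_Suc) simp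
  qed
qed

lemma fibZ_add_two: "fibZ (k + 2) = fibZ (k + 1) + fibZ k"
  unfolding fibZ_def by (rule rec_seq_add_two)

lemma lucZ_add_two: "lucZ (k + 2) = lucZ (k + 1) + lucZ k"
  unfolding lucZ_def by (rule rec_seq_add_two)

lemma fibonacci_like_add_two_minus_one:
  fixes X :: "int \<Rightarrow> 'a::comm_ring_1"
  assumes rec: "\<And>k. X (k + 2) = X (k + 1) + X k"
  shows "X (m + 2) - X (m - 1) = 2 * X m"
  using rec[of m] rec[of "m - 1"] by (simp add: algebra_simps)

lemma sum_int_atLeastAtMost_telescope:
  fixes f G :: "int \<Rightarrow> 'a::ab_group_add"
  assumes "\<And>k. f k = G k - G (k - 1)" and "c - 1 \<le> m"
  shows "(\<Sum>k\<in>{c..m}. f k) = G m - G (c - 1)"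
  using assms(2)
proof (induction m rule: int_ge_induct)
  case base
  then show ?case by simp
next
  case (step i)
  then have "{c..i + 1} = insert (i + 1) {c..i}" by auto
  with step assms(1)[of "i + 1"] show ?case by simp
qed

lemma gsum_telescope:
  assumes "\<And>k. f k = G k - G (k - 1)"
  shows "gsum c m f = G m - G (c - 1)"
proof -
  consider "m \<ge> c" | "m = c - 1" | "m < c - 1" by linarith
  then show ?thesis
  proof cases
    case 1
    then show ?thesis
      unfolding gsum_def using sum_int_atLeastAtMost_telescope[of f G, OF assms, of c m] by simp
  next
    case 2
    then show ?thesis unfolding gsum_def by simp
  next
    case 3
    then show ?thesis
      unfolding gsum_def using sum_int_atLeastAtMost_telescope[of f G, OF assms, of "m + 1" "c - 1"] by simp
  qed
qed

definition nested_sum_closed_form :: "(int \<Rightarrow> real) \<Rightarrow> int \<Rightarrow> int \<Rightarrow> nat \<Rightarrow> int \<Rightarrow> real" where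
  "nested_sum_closed_form X s c n b = X (2 * int n + 3 * b + s) / 2 ^ n
     - (\<Sum>j<n. X (2 * int (n - j) + 3 * (c - 1) + s) / 2 ^ (n - j)
                 * (real_of_int (b + int j - c) gchoose j))"

lemma nested_sum_closed_form_diff:
  assumes rec: "\<And>k. X (k + 2) = X (k + 1) + X k"
  shows "nested_sum_closed_form X s c (Suc n) b - nested_sum_closed_form X s c (Suc n) (b - 1)
    = nested_sum_closed_form X s c n b"
proof -
  define t where "t i = X (2 * int (n - i) + 3 * (c - 1) + s) / 2 ^ (n - i)" for i
  have split_first: "(\<Sum>j<Suc n. X (2 * int (Suc n - j) + 3 * (c - 1) + s) / 2 ^ (Suc n - j)
                 * (real_of_int (b' + int j - c) gchoose j))
        = X (2 * int (Suc n) + 3 * (c - 1) + s) / 2 ^ Suc n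
          + (\<Sum>i<n. t i * (real_of_int (b' + int (Suc i) - c) gchoose Suc i))" for b'
    by (subst sum.lessThan_Suc_shift) (simp add: t_def)
  have pascal: "(real_of_int (b + int (Suc i) - c) gchoose Suc i)
      - (real_of_int (b - 1 + int (Suc i) - c) gchoose Suc i) = real_of_int (b + int i - c) gchoose i"
    for i
  proof -
    have "real_of_int (b + int (Suc i) - c) = real_of_int (b + int i - c) + 1"
      and "real_of_int (b - 1 + int (Suc i) - c) = real_of_int (b + int i - c)" by simp_all
    then show ?thesis by (simp only: gbinomial_Suc_Suc)
  qed
  have "(\<Sum>i<n. t i * (real_of_int (b + int (Suc i) - c) gchoose Suc i))
      - (\<Sum>i<n. t i * (real_of_int (b - 1 + int (Suc i) - c) gchoose Suc i))
      = (\<Sum>i<n. t i * (real_of_int (b + int i - c) gchoose i))"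
    by (simp only: sum_subtractf[symmetric] right_diff_distrib[symmetric] pascal)
  moreover
  have "X (2 * int (Suc n) + 3 * b + s) - X (2 * int (Suc n) + 3 * (b - 1) + s)
      = 2 * X (2 * int n + 3 * b + s)"
    using fibonacci_like_add_two_minus_one[OF rec, of "2 * int n + 3 * b + s"]
    by (simp add: algebra_simps)
  then have "X (2 * int (Suc n) + 3 * b + s) / 2 ^ Suc n - X (2 * int (Suc n) + 3 * (b - 1) + s) / 2 ^ Suc n
      = X (2 * int n + 3 * b + s) / 2 ^ n"
    by (simp add: diff_divide_distrib[symmetric])
  ultimately show ?thesis
    unfolding nested_sum_closed_form_def split_first t_def by (simp add: algebra_simps)
qed

lemma nested_sum_closed_form_below_start: "nested_sum_closed_form X s c (Suc n) (c - 1) = 0"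
proof -
  have "real_of_int (c - 1 + int (Suc i) - c) gchoose Suc i = 0" for i
  proof -
    have "real_of_int (c - 1 + int (Suc i) - c) = real i" by simp
    then show ?thesis by (simp flip: binomial_gbinomial)
  qed
  then show ?thesis
    unfolding nested_sum_closed_form_def by (subst sum.lessThan_Suc_shift) (simp only:, simp)
qed

lemma nested_sum_eq_closed_form:
  assumes rec: "\<And>k. X (k + 2) = X (k + 1) + X k"
  shows "nested_sum c n (\<lambda>a0. X (3 * a0 + s)) a = nested_sum_closed_form X s c n a"
proof (induction n arbitrary: a)
  case 0
  show ?case by (simp add: nested_sum_closed_form_def)
next
  case (Suc n)
  have "nested_sum c (Suc n) (\<lambda>a0. X (3 * a0 + s)) a = gsum c a (nested_sum_closed_form X s c n)"
    by (simp only: nested_sum.simps ext[OF Suc.IH])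
  also have "\<dots> = nested_sum_closed_form X s c (Suc n) a - nested_sum_closed_form X s c (Suc n) (c - 1)"
    by (rule gsum_telescope) (simp add: nested_sum_closed_form_diff[OF rec])
  finally show ?case by (simp add: nested_sum_closed_form_below_start)
qed

theorem theorem1:
  fixes an s c :: int and n :: nat
  assumes "n > 0"
  shows "(nested_sum c n (\<lambda>a0. real_of_int (fibZ (3 * a0 + s))) an
           = real_of_int (fibZ (2 * int n + 3 * an + s)) / 2 ^ n
             - (\<Sum>j<n. real_of_int (fibZ (2 * int (n - j) + 3 * (c - 1) + s)) / 2 ^ (n - j)
                         * (real_of_int (an + int j - c) gchoose j))) \<and>
         (nested_sum c n (\<lambda>a0. real_of_int (lucZ (3 * a0 + s))) an
           = real_of_int (lucZ (2 * int n + 3 * an + s)) / 2 ^ n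
             - (\<Sum>j<n. real_of_int (lucZ (2 * int (n - j) + 3 * (c - 1) + s)) / 2 ^ (n - j)
                         * (real_of_int (an + int j - c) gchoose j)))"
  using nested_sum_eq_closed_form[of "\<lambda>k. real_of_int (fibZ k)" c n s an]
    nested_sum_eq_closed_form[of "\<lambda>k. real_of_int (lucZ k)" c n s an]
  by (simp_all add: fibZ_add_two lucZ_add_two nested_sum_closed_form_def)

end
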